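(* Fix weights $w_1,\dots,w_D>0$ and let $\mu_{n,N,w}$ be the Boltzmann probability measure on perfect matchings $\tau$ of the $N$-fold blow-up $\mathbb T(n,\Lambda)_N$, with $\mu_{n,N,w}(\tau)\propto\prod_{e\in\tau}w(e)$, where every lift of an edge of type $e_i$ has weight $w_i$. Let $H(\mu_{n,N,w})=-\sum_\tau\mu_{n,N,w}(\tau)\log\mu_{n,N,w}(\tau)$ be its Shannon entropy. Then $$\lim_{n\to\infty}\lim_{N\to\infty}\frac{1}{Nn^d}\Big[H(\mu_{n,N,w})-n^d\log N!\Big]=\log(w_1+\dots+w_D)-\frac{1}{w_1+\dots+w_D}\sum_{i=1}^D w_i\log w_i .$$
   Context: $\Lambda$ is a bipartite graph embedded in $\mathbb R^d$ of the following form (or a linear image of one): there are vectors $e_1,\dots,e_D\in\mathbb R^d$ spanning $\mathbb R^d$ with $\sum_{i=1}^D e_i=0$ and a vector $v_0$ with $e_i\in v_0+\mathbb Z^d$ for all $i$; the white vertices are $W=\mathbb Z^d$, the black vertices are $B=\mathbb Z^d+v_0$, and each white vertex $w$ is joined by an edge exactly to the black vertices $w+e_1,\dots,w+e_D$; $\Lambda$ is connected. An edge from $w$ to $w+e_i$ is said to be of type $e_i$. The torus $\mathbb T(n,\Lambda)=\Lambda/n\mathbb Z^d$ has $n^d$ white and $n^d$ black vertices. The $N$-fold blow-up $G_N$ of a graph $G$ replaces every vertex by $N$ copies (lifts) and every edge $(u,v)$ by the complete bipartite graph between the lifts of $u$ and the lifts of $v$. *)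

theory Defs
  imports "HOL-Analysis.Analysis"
begin

definition int_point :: "real^'d \<Rightarrow> bool" where
  "int_point x \<longleftrightarrow> (\<forall>j. x $ j \<in> \<int>)"

text \<open>Vertices of Lambda are tagged points: (False, x) is the white vertex x \<in> Z^d,
  (True, y) is the black vertex y \<in> Z^d + v0.\<close>
definition Lambda_vertex :: "real^'d \<Rightarrow> bool \<times> (real^'d) \<Rightarrow> bool" where
  "Lambda_vertex v0 u \<longleftrightarrow>
     (if fst u then int_point (snd u - v0) else int_point (snd u))"

definition Lambda_adj :: "nat \<Rightarrow> (nat \<Rightarrow> real^'d) \<Rightarrow> bool \<times> (real^'d) \<Rightarrow> bool \<times> (real^'d) \<Rightarrow> bool" where
  "Lambda_adj D e u v \<longleftrightarrow>
     (\<exists>w i. i < D \<and> int_point w \<and>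
        ((u = (False, w) \<and> v = (True, w + e i)) \<or> (v = (False, w) \<and> u = (True, w + e i))))"

definition Lambda_connected :: "nat \<Rightarrow> (nat \<Rightarrow> real^'d) \<Rightarrow> real^'d \<Rightarrow> bool" where
  "Lambda_connected D e v0 \<longleftrightarrow>
     (\<forall>u v. Lambda_vertex v0 u \<longrightarrow> Lambda_vertex v0 v \<longrightarrow> (Lambda_adj D e)\<^sup>*\<^sup>* u v)"

text \<open>Integer offset k_i with e_i = v0 + k_i (black vertex w + e_i has index w + k_i).\<close>
definition offset :: "(nat \<Rightarrow> real^'d) \<Rightarrow> real^'d \<Rightarrow> nat \<Rightarrow> int^'d" where
  "offset e v0 i = (\<chi> j. \<lfloor>(e i - v0) $ j\<rfloor>)"

text \<open>Representatives of Z^d / nZ^d (indices of white, resp. black, vertices).\<close>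
definition torus_pts :: "nat \<Rightarrow> (int^'d) set" where
  "torus_pts n = {x. \<forall>j. 0 \<le> x $ j \<and> x $ j < int n}"

definition tmod :: "nat \<Rightarrow> int^'d \<Rightarrow> int^'d" where
  "tmod n x = (\<chi> j. x $ j mod int n)"

text \<open>Edges of the blow-up: ((x,a), i, b) joins white lift (x,a) to black lift
  (x + k_i mod n, b) and has type i.\<close>
definition blowup_edges :: "nat \<Rightarrow> nat \<Rightarrow> nat \<Rightarrow> (((int^'d) \<times> nat) \<times> nat \<times> nat) set" where
  "blowup_edges D n N = {((x,a),i,b). x \<in> torus_pts n \<and> a < N \<and> i < D \<and> b < N}"

definition edge_black :: "(nat \<Rightarrow> real^'d) \<Rightarrow> real^'d \<Rightarrow> nat \<Rightarrow> ((int^'d) \<times> nat) \<times> nat \<times> nat \<Rightarrow> (int^'d) \<times> nat" where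
  "edge_black e v0 n t = (case t of ((x,a),i,b) \<Rightarrow> (tmod n (x + offset e v0 i), b))"

definition edge_white :: "((int^'d) \<times> nat) \<times> nat \<times> nat \<Rightarrow> (int^'d) \<times> nat" where
  "edge_white t = fst t"

definition edge_type :: "((int^'d) \<times> nat) \<times> nat \<times> nat \<Rightarrow> nat" where
  "edge_type t = fst (snd t)"

definition perfect_matchings ::
  "nat \<Rightarrow> (nat \<Rightarrow> real^'d) \<Rightarrow> real^'d \<Rightarrow> nat \<Rightarrow> nat \<Rightarrow> (((int^'d) \<times> nat) \<times> nat \<times> nat) set set" where
  "perfect_matchings D e v0 n N =
     {\<tau>. \<tau> \<subseteq> blowup_edges D n N \<and>
          (\<forall>u \<in> torus_pts n \<times> {..<N}. \<exists>!t. t \<in> \<tau> \<and> edge_white t = u) \<and>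
          (\<forall>v \<in> torus_pts n \<times> {..<N}. \<exists>!t. t \<in> \<tau> \<and> edge_black e v0 n t = v)}"

definition match_weight :: "(nat \<Rightarrow> real) \<Rightarrow> (((int^'d) \<times> nat) \<times> nat \<times> nat) set \<Rightarrow> real" where
  "match_weight w \<tau> = (\<Prod>t\<in>\<tau>. w (edge_type t))"

definition partition_fn :: "nat \<Rightarrow> (nat \<Rightarrow> real^'d) \<Rightarrow> real^'d \<Rightarrow> (nat \<Rightarrow> real) \<Rightarrow> nat \<Rightarrow> nat \<Rightarrow> real" where
  "partition_fn D e v0 w n N = (\<Sum>\<tau>\<in>perfect_matchings D e v0 n N. match_weight w \<tau>)"

definition boltzmann :: "nat \<Rightarrow> (nat \<Rightarrow> real^'d) \<Rightarrow> real^'d \<Rightarrow> (nat \<Rightarrow> real) \<Rightarrow> nat \<Rightarrow> nat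
    \<Rightarrow> (((int^'d) \<times> nat) \<times> nat \<times> nat) set \<Rightarrow> real" where
  "boltzmann D e v0 w n N \<tau> = match_weight w \<tau> / partition_fn D e v0 w n N"

definition boltzmann_entropy :: "nat \<Rightarrow> (nat \<Rightarrow> real^'d) \<Rightarrow> real^'d \<Rightarrow> (nat \<Rightarrow> real) \<Rightarrow> nat \<Rightarrow> nat \<Rightarrow> real" where
  "boltzmann_entropy D e v0 w n N =
     - (\<Sum>\<tau>\<in>perfect_matchings D e v0 n N.
          boltzmann D e v0 w n N \<tau> * ln (boltzmann D e v0 w n N \<tau>))"

end

theory Submission
  imports Defs "HOL-Real_Asymp.Real_Asymp"
begin

(* A perfect matching of the N-fold blow-up is the same as a choice of an edge type for every white
  lift together with, for every black vertex y, a bijection from the white lifts whose edge ends at y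
  onto the N lifts of y. Such bijections exist iff the type assignment is balanced (every black vertex
  receives exactly N edges), and then there are (N!)^(n^d) of them, while the weight of the matching
  depends on the types only. Hence H - n^d log N! = log A - E/A, where A is the total weight of the
  balanced assignments and E the sum of weight times log-weight over them.

  All type assignments together weigh W^(n^d N), where W = w_1 + ... + w_D. The assignments in which
  every white vertex uses the same, most likely, vector of type counts are balanced and weigh at least
  W^(n^d N) / (N+1)^(D n^d); so log A / (N n^d) tends to log W. A Chernoff bound shows that, outside a
  set of exponentially small weight, the log-weight of an assignment is N n^d (sum_i w_i log w_i / W + o(1));
  since the exponential gain beats the polynomial loss in A, E / (A N n^d) tends to sum_i w_i log w_i / W.
  So the inner limit already has the claimed value for every n >= 1. *)

section \<open>Finite sums, bijections and entropy\<close>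

lemma bij_betw_iff_ex1: "bij_betw f A B \<longleftrightarrow> f ` A \<subseteq> B \<and> (\<forall>b \<in> B. \<exists>!a. a \<in> A \<and> f a = b)"
proof
  assume bij: "bij_betw f A B"
  have "\<exists>!a. a \<in> A \<and> f a = b" if b: "b \<in> B" for b
  proof -
    obtain a where "a \<in> A" "f a = b"
      using b bij_betw_imp_surj_on[OF bij] by blast
    then show ?thesis
      using bij_betw_imp_inj_on[OF bij] by (auto dest: inj_onD)
  qed
  then show "f ` A \<subseteq> B \<and> (\<forall>b \<in> B. \<exists>!a. a \<in> A \<and> f a = b)"
    using bij_betw_imp_surj_on[OF bij] by blast
next
  assume *: "f ` A \<subseteq> B \<and> (\<forall>b \<in> B. \<exists>!a. a \<in> A \<and> f a = b)"
  then have "inj_on f A"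
    by (intro inj_onI) (metis image_subset_iff)
  moreover have "f ` A = B"
    using * by (auto simp: image_iff)
  ultimately show "bij_betw f A B"
    unfolding bij_betw_def ..
qed

lemma ex1_image_iff:
  assumes "inj_on g A"
  shows "(\<exists>!t. t \<in> g ` A \<and> P t) \<longleftrightarrow> (\<exists>!a. a \<in> A \<and> P (g a))"
proof
  assume "\<exists>!t. t \<in> g ` A \<and> P t"
  then obtain a where "a \<in> A" "P (g a)" "\<And>t. t \<in> g ` A \<Longrightarrow> P t \<Longrightarrow> t = g a"
    by blast
  then show "\<exists>!a. a \<in> A \<and> P (g a)"
    using assms by (auto dest: inj_onD)
next
  assume "\<exists>!a. a \<in> A \<and> P (g a)"
  then show "\<exists>!t. t \<in> g ` A \<and> P t"
    by blast
qed

lemma card_bijections_lessThan: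
  assumes "finite A" "card A = N"
  shows "card {g \<in> A \<rightarrow>\<^sub>E {..<N}. bij_betw g A {..<N}} = fact N"
proof -
  have "{g \<in> A \<rightarrow>\<^sub>E {..<N}. bij_betw g A {..<N}} = {g \<in> A \<rightarrow>\<^sub>E {..<N}. inj_on g A}"
  proof (intro Collect_cong conj_cong refl)
    fix g assume g: "g \<in> A \<rightarrow>\<^sub>E {..<N}"
    show "bij_betw g A {..<N} \<longleftrightarrow> inj_on g A"
    proof
      assume inj: "inj_on g A"
      moreover have "g ` A \<subseteq> {..<N}"
        using g by auto
      moreover have "card (g ` A) = card {..<N}"
        using inj assms by (simp add: card_image)
      ultimately show "bij_betw g A {..<N}"
        unfolding bij_betw_def by (simp add: card_subset_eq)
    qed (simp add: bij_betw_def)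
  qed
  also have "card \<dots> = fact N"
    using card_inj_on_subset_funcset[of A "{..<N}" A] assms by (simp add: fact_prod_rev)
  finally show ?thesis .
qed

lemma bij_betw_restrict_fibers:
  fixes f :: "'a \<Rightarrow> 'b" and V :: "'a set"
  defines "F \<equiv> \<lambda>y. {u \<in> V. f u = y}"
  assumes Y: "f ` V \<subseteq> Y"
  shows "bij_betw (\<lambda>\<beta>. \<lambda>y \<in> Y. restrict \<beta> (F y))
    {\<beta> \<in> V \<rightarrow>\<^sub>E {..<N}. \<forall>y \<in> Y. bij_betw \<beta> (F y) {..<N}}
    (\<Pi>\<^sub>E y \<in> Y. {g \<in> F y \<rightarrow>\<^sub>E {..<N}. bij_betw g (F y) {..<N}})"
    (is "bij_betw _ ?S ?T")
proof (rule bij_betw_byWitness[where f' = "\<lambda>G. \<lambda>u \<in> V. G (f u) u"])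
  show "\<forall>\<beta> \<in> ?S. (\<lambda>u \<in> V. (\<lambda>y \<in> Y. restrict \<beta> (F y)) (f u) u) = \<beta>"
    using Y unfolding F_def by (auto simp: fun_eq_iff PiE_def extensional_def)
  show "\<forall>G \<in> ?T. (\<lambda>y \<in> Y. restrict (\<lambda>u \<in> V. G (f u) u) (F y)) = G"
  proof
    fix G assume G: "G \<in> ?T"
    have fiber: "restrict (\<lambda>u \<in> V. G (f u) u) (F y) = G y" if "y \<in> Y" for y
    proof -
      have Gy: "G y \<in> F y \<rightarrow>\<^sub>E {..<N}"
        using PiE_mem[OF G that] unfolding mem_Collect_eq by (rule conjunct1)
      show ?thesis
      proof
        fix u
        show "restrict (\<lambda>u \<in> V. G (f u) u) (F y) u = G y u"
          using PiE_arb[OF Gy, of u] by (cases "u \<in> F y") (simp_all add: F_def)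
      qed
    qed
    show "(\<lambda>y \<in> Y. restrict (\<lambda>u \<in> V. G (f u) u) (F y)) = G"
    proof
      fix y
      show "(\<lambda>y \<in> Y. restrict (\<lambda>u \<in> V. G (f u) u) (F y)) y = G y"
        using PiE_arb[OF G, of y] fiber by (cases "y \<in> Y") simp_all
    qed
  qed
  show "(\<lambda>\<beta>. \<lambda>y \<in> Y. restrict \<beta> (F y)) ` ?S \<subseteq> ?T"
  proof (rule image_subsetI)
    fix \<beta> assume "\<beta> \<in> ?S"
    then have \<beta>: "\<beta> \<in> V \<rightarrow>\<^sub>E {..<N}" "\<forall>y \<in> Y. bij_betw \<beta> (F y) {..<N}"
      by auto
    have "restrict \<beta> (F y) \<in> F y \<rightarrow>\<^sub>E {..<N}" for y
      using \<beta>(1) unfolding F_def by auto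
    with \<beta>(2) show "(\<lambda>y \<in> Y. restrict \<beta> (F y)) \<in> ?T"
      by auto
  qed
  show "(\<lambda>G. \<lambda>u \<in> V. G (f u) u) ` ?T \<subseteq> ?S"
  proof (rule image_subsetI)
    fix G assume G: "G \<in> ?T"
    have GB: "G y \<in> F y \<rightarrow>\<^sub>E {..<N} \<and> bij_betw (G y) (F y) {..<N}" if "y \<in> Y" for y
      using PiE_mem[OF G that] unfolding mem_Collect_eq .
    have "bij_betw (\<lambda>u \<in> V. G (f u) u) (F y) {..<N}" if "y \<in> Y" for y
      using GB[OF that] by (subst bij_betw_cong[where g = "G y"]) (auto simp: F_def)
    moreover have "(\<lambda>u \<in> V. G (f u) u) \<in> V \<rightarrow>\<^sub>E {..<N}"
    proof
      fix u assume "u \<in> V"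
      then have "u \<in> F (f u)" "f u \<in> Y"
        using Y unfolding F_def by auto
      then show "(\<lambda>u \<in> V. G (f u) u) u \<in> {..<N}"
        using GB \<open>u \<in> V\<close> by auto
    qed auto
    ultimately show "(\<lambda>u \<in> V. G (f u) u) \<in> ?S"
      by blast
  qed
qed

lemma card_fiberwise_bijections:
  fixes f :: "'a \<Rightarrow> 'b"
  assumes V: "finite V" and Y: "finite Y" "f ` V \<subseteq> Y"
    and fibers: "\<forall>y \<in> Y. card {u \<in> V. f u = y} = N"
  shows "card {\<beta> \<in> V \<rightarrow>\<^sub>E {..<N}. \<forall>y \<in> Y. bij_betw \<beta> {u \<in> V. f u = y} {..<N}} = fact N ^ card Y"
proof -
  have "card {\<beta> \<in> V \<rightarrow>\<^sub>E {..<N}. \<forall>y \<in> Y. bij_betw \<beta> {u \<in> V. f u = y} {..<N}} =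
      card (\<Pi>\<^sub>E y \<in> Y. {g \<in> {u \<in> V. f u = y} \<rightarrow>\<^sub>E {..<N}. bij_betw g {u \<in> V. f u = y} {..<N}})"
    using bij_betw_restrict_fibers[OF Y(2), of N] by (rule bij_betw_same_card)
  also have "\<dots> = (\<Prod>y \<in> Y. fact N)"
    unfolding card_PiE[OF Y(1)] using V fibers by (intro prod.cong refl card_bijections_lessThan) auto
  finally show ?thesis
    by simp
qed

lemma exists_sum_le_card_mult:
  fixes h :: "'a \<Rightarrow> real"
  assumes "finite C" "C \<noteq> {}"
  shows "\<exists>c \<in> C. sum h C \<le> real (card C) * h c"
proof -
  have "Max (h ` C) \<in> h ` C"
    using assms by (intro Max_in) auto
  then obtain c where c: "c \<in> C" "h c = Max (h ` C)"
    by (metis imageE)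
  have "\<forall>c' \<in> C. h c' \<le> h c"
    unfolding c(2) using assms(1) by (intro ballI Max_ge) auto
  then show ?thesis
    using c(1) by (intro bexI[of _ c] sum_bounded_above) auto
qed

lemma sum_le_sum_Un:
  fixes f :: "'a \<Rightarrow> real"
  assumes "finite A" "finite B" "C \<subseteq> A \<union> B" "\<forall>x \<in> A \<union> B. 0 \<le> f x"
  shows "sum f C \<le> sum f A + sum f B"
proof -
  have "sum f C \<le> sum f (A \<union> B)"
    using assms by (intro sum_mono2) auto
  also have "\<dots> \<le> sum f A + sum f B"
  proof -
    have "0 \<le> sum f (A \<inter> B)"
      using assms(4) by (intro sum_nonneg) auto
    then show ?thesis
      using assms(1,2) by (simp add: sum_Un)
  qed
  finally show ?thesis .
qed

lemma sum_lessThan_pos: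
  fixes f :: "nat \<Rightarrow> real"
  assumes "D \<ge> 1" "\<forall>i<D. 0 < f i"
  shows "0 < (\<Sum>i<D. f i)"
  using assms by (intro sum_pos) (auto simp: lessThan_empty_iff)

(* Zero weights need no special care: they contribute 0 to both sides, since ln 0 = 0. *)
lemma entropy_of_normalized_weights:
  fixes p :: "'a \<Rightarrow> real"
  assumes S: "finite S" and p: "\<forall>s \<in> S. 0 \<le> p s"
  shows "- (\<Sum>s \<in> S. p s / sum p S * ln (p s / sum p S)) = ln (sum p S) - (\<Sum>s \<in> S. p s * ln (p s)) / sum p S"
proof (cases "sum p S = 0")
  case True
  then have "\<forall>s \<in> S. p s = 0"
    using sum_nonneg_eq_0_iff[OF S] p by blast
  with True show ?thesis
    by simp
next
  case False
  then have Z: "sum p S > 0"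
    using sum_nonneg[of S p] p by fastforce
  have "p s / sum p S * ln (p s / sum p S) = p s * ln (p s) / sum p S - ln (sum p S) * (p s / sum p S)"
    if "s \<in> S" for s
    using p that Z by (cases "p s = 0") (auto simp: ln_div field_simps)
  then have "(\<Sum>s \<in> S. p s / sum p S * ln (p s / sum p S)) =
      (\<Sum>s \<in> S. p s * ln (p s) / sum p S - ln (sum p S) * (p s / sum p S))"
    by (rule sum.cong[OF refl])
  also have "\<dots> = (\<Sum>s \<in> S. p s * ln (p s)) / sum p S - ln (sum p S) * (sum p S / sum p S)"
    by (simp only: sum_subtractf sum_divide_distrib[symmetric] sum_distrib_left[symmetric])
  finally have "(\<Sum>s \<in> S. p s / sum p S * ln (p s / sum p S)) =
      (\<Sum>s \<in> S. p s * ln (p s)) / sum p S - ln (sum p S) * (sum p S / sum p S)" .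
  with Z show ?thesis
    by simp
qed

lemma abs_weighted_sum_le:
  fixes p f :: "'a \<Rightarrow> real"
  assumes S: "finite S" and p: "\<forall>s \<in> S. 0 \<le> p s" and f: "\<forall>s \<in> S. \<bar>f s\<bar> \<le> B" and \<epsilon>: "0 \<le> \<epsilon>"
  shows "\<bar>\<Sum>s \<in> S. p s * f s\<bar> \<le> \<epsilon> * (\<Sum>s \<in> S. p s) + B * (\<Sum>s \<in> {s \<in> S. \<epsilon> \<le> \<bar>f s\<bar>}. p s)"
proof -
  have "\<bar>\<Sum>s \<in> S. p s * f s\<bar> \<le> (\<Sum>s \<in> S. p s * \<bar>f s\<bar>)"
    using p by (auto intro: order_trans[OF sum_abs] simp: abs_mult)
  also have "\<dots> \<le> (\<Sum>s \<in> S. \<epsilon> * p s + (if \<epsilon> \<le> \<bar>f s\<bar> then B * p s else 0))"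
  proof (rule sum_mono)
    fix s assume s: "s \<in> S"
    show "p s * \<bar>f s\<bar> \<le> \<epsilon> * p s + (if \<epsilon> \<le> \<bar>f s\<bar> then B * p s else 0)"
    proof (cases "\<epsilon> \<le> \<bar>f s\<bar>")
      case True
      have "p s * \<bar>f s\<bar> \<le> B * p s"
        using mult_left_mono[OF f[rule_format, OF s] p[rule_format, OF s]] by (simp add: mult.commute)
      moreover have "0 \<le> \<epsilon> * p s"
        using \<epsilon> p s by simp
      ultimately show ?thesis
        using True by simp
    next
      case False
      then show ?thesis
        using mult_left_mono[of "\<bar>f s\<bar>" \<epsilon> "p s"] p s by (simp add: mult.commute)
    qed
  qed
  also have "\<dots> = \<epsilon> * (\<Sum>s \<in> S. p s) + (\<Sum>s \<in> S. if \<epsilon> \<le> \<bar>f s\<bar> then B * p s else 0)"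
    by (simp add: sum.distrib sum_distrib_left)
  also have "(\<Sum>s \<in> S. if \<epsilon> \<le> \<bar>f s\<bar> then B * p s else 0) = B * (\<Sum>s \<in> {s \<in> S. \<epsilon> \<le> \<bar>f s\<bar>}. p s)"
    unfolding sum.inter_filter[OF S] sum_distrib_left by (rule sum.cong) simp_all
  finally show ?thesis .
qed

lemma abs_weighted_mean_le:
  fixes w l :: "nat \<Rightarrow> real"
  assumes "D \<ge> 1" "\<forall>j<D. 0 < w j" "\<forall>j<D. \<bar>l j\<bar> \<le> K"
  shows "\<bar>(\<Sum>j<D. w j * l j) / (\<Sum>j<D. w j)\<bar> \<le> K"
proof -
  have W: "0 < (\<Sum>j<D. w j)"
    using assms(1,2) by (rule sum_lessThan_pos)
  have "\<bar>w j * l j\<bar> \<le> w j * K" if "j < D" for j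
  proof -
    have "0 < w j" "\<bar>l j\<bar> \<le> K"
      using assms(2,3) that by auto
    then show ?thesis
      by (simp add: abs_mult mult_left_mono)
  qed
  then have "\<bar>\<Sum>j<D. w j * l j\<bar> \<le> (\<Sum>j<D. w j * K)"
    by (intro order_trans[OF sum_abs] sum_mono) simp
  also have "\<dots> = K * (\<Sum>j<D. w j)"
    by (subst sum_distrib_left) (simp add: mult.commute)
  finally have "\<bar>\<Sum>j<D. w j * l j\<bar> / (\<Sum>j<D. w j) \<le> K"
    by (simp only: pos_divide_le_eq[OF W])
  then show ?thesis
    by (simp only: abs_divide abs_of_pos[OF W])
qed

lemma exponential_markov_bound:
  fixes p \<phi> :: "'a \<Rightarrow> real"
  assumes I: "finite I" and p: "\<forall>i \<in> I. 0 \<le> p i" and s: "0 \<le> s"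
  shows "(\<Sum>i \<in> {i \<in> I. t \<le> \<phi> i}. p i) \<le> exp (- s * t) * (\<Sum>i \<in> I. p i * exp (s * \<phi> i))"
proof -
  have "(\<Sum>i \<in> {i \<in> I. t \<le> \<phi> i}. p i) \<le> (\<Sum>i \<in> {i \<in> I. t \<le> \<phi> i}. p i * exp (s * (\<phi> i - t)))"
  proof (rule sum_mono)
    fix i assume "i \<in> {i \<in> I. t \<le> \<phi> i}"
    then have "1 \<le> exp (s * (\<phi> i - t))" "0 \<le> p i"
      using p s by auto
    then show "p i \<le> p i * exp (s * (\<phi> i - t))"
      using mult_left_mono[of 1 "exp (s * (\<phi> i - t))" "p i"] by simp
  qed
  also have "\<dots> \<le> (\<Sum>i \<in> I. p i * exp (s * (\<phi> i - t)))"
    using I p by (intro sum_mono2) auto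
  also have "\<dots> = exp (- s * t) * (\<Sum>i \<in> I. p i * exp (s * \<phi> i))"
    by (simp add: sum_distrib_left right_diff_distrib exp_diff exp_minus field_simps)
  finally show ?thesis .
qed

lemma exists_chernoff_exponent:
  fixes q l :: "nat \<Rightarrow> real"
  assumes q: "(\<Sum>j<D. q j) = 1" and \<epsilon>: "0 < \<epsilon>"
  shows "\<exists>s > 0. (\<Sum>j<D. q j * exp (s * (l j - (\<Sum>i<D. q i * l i) - \<epsilon>))) < 1"
proof -
  define c where "c j = l j - (\<Sum>i<D. q i * l i) - \<epsilon>" for j
  define f where "f s = (\<Sum>j<D. q j * exp (s * c j))" for s
  (* f is 1 at 0 with derivative -\<epsilon> there, so it drops below 1 just right of 0. *)
  have "(f has_real_derivative (\<Sum>j<D. q j * c j)) (at 0)"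
    unfolding f_def by (auto intro!: derivative_eq_intros simp: mult.commute)
  moreover have "(\<Sum>j<D. q j * c j) = - \<epsilon>"
    using q unfolding c_def by (simp add: right_diff_distrib sum_subtractf sum_distrib_right[symmetric])
  ultimately have "(f has_real_derivative - \<epsilon>) (at 0)"
    by simp
  then obtain d where "d > 0" "\<forall>h > 0. h < d \<longrightarrow> f (0 + h) < f 0"
    using DERIV_neg_dec_right \<epsilon> by (metis neg_less_0_iff_less)
  then have "f (d / 2) < f 0"
    by simp
  also have "f 0 = 1"
    using q unfolding f_def by simp
  finally have "f (d / 2) < 1" .
  with \<open>d > 0\<close> show ?thesis
    unfolding f_def c_def by (intro exI[of _ "d / 2"]) simp
qed

lemma geometric_times_polynomial_tendsto_zero:
  fixes r :: real
  assumes "0 < r" "r < 1"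
  shows "(\<lambda>N. r ^ N * real (N + 1) ^ k) \<longlonglongrightarrow> 0"
  using assms by real_asymp

lemma mod_add_eq_iff:
  fixes x k y m :: int
  assumes "0 \<le> x" "x < m"
  shows "(x + k) mod m = y \<longleftrightarrow> x = (y - k) mod m \<and> 0 \<le> y \<and> y < m"
  using assms by (auto simp: mod_diff_left_eq mod_add_left_eq)

lemma torus_pts_eq_image: "torus_pts n = vec_lambda ` (UNIV \<rightarrow>\<^sub>E {0..<int n})"
proof -
  have "x \<in> vec_lambda ` (UNIV \<rightarrow>\<^sub>E {0..<int n})" if "x \<in> torus_pts n" for x :: "int^'d"
    using that unfolding torus_pts_def by (intro image_eqI[of _ _ "vec_nth x"]) auto
  then show ?thesis
    unfolding torus_pts_def by auto
qed

lemma card_torus_pts: "card (torus_pts n :: (int^'d) set) = n ^ CARD('d)"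
proof -
  have "card (torus_pts n :: (int^'d) set) = card (UNIV \<rightarrow>\<^sub>E {0..<int n} :: ('d \<Rightarrow> int) set)"
    unfolding torus_pts_eq_image by (rule card_image) (auto intro: inj_onI simp: vec_lambda_inject)
  then show ?thesis
    by (simp add: card_PiE)
qed

lemma finite_torus_pts: "finite (torus_pts n)"
  unfolding torus_pts_eq_image by (intro finite_imageI finite_PiE) auto

lemma tmod_in_torus_pts: "n \<ge> 1 \<Longrightarrow> tmod n z \<in> torus_pts n"
  unfolding tmod_def torus_pts_def by auto

lemma tmod_add_eq_iff:
  assumes "n \<ge> 1" "x \<in> torus_pts n"
  shows "tmod n (x + k) = y \<longleftrightarrow> x = tmod n (y - k) \<and> y \<in> torus_pts n"
  using assms mod_add_eq_iff[of "x $ j" "int n" "k $ j" "y $ j" for j]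
  unfolding tmod_def torus_pts_def by (auto simp: vec_eq_iff)

section \<open>Perfect matchings of the blow-up\<close>

(* A perfect matching of the blow-up is encoded by the type \<iota> x a of the edge at every white lift
  (x, a) and the label \<beta> (x, a) < N of the black lift at its other end. The black vertices and their
  lifts are indexed like the white ones, by the torus points and labels below N. *)

type_synonym 'd type_assignment = "int^'d \<Rightarrow> nat \<Rightarrow> nat"

abbreviation lifts :: "nat \<Rightarrow> nat \<Rightarrow> ((int^'d) \<times> nat) set" where
  "lifts n N \<equiv> torus_pts n \<times> {..<N}"

definition type_assignments :: "nat \<Rightarrow> nat \<Rightarrow> nat \<Rightarrow> ('d::finite) type_assignment set" where
  "type_assignments D n N = torus_pts n \<rightarrow>\<^sub>E ({..<N} \<rightarrow>\<^sub>E {..<D})"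

definition black_site :: "(nat \<Rightarrow> real^'d) \<Rightarrow> real^'d \<Rightarrow> nat \<Rightarrow> int^'d \<Rightarrow> nat \<Rightarrow> int^'d" where
  "black_site e v0 n x i = tmod n (x + offset e v0 i)"

definition black_preimage ::
  "(nat \<Rightarrow> real^'d) \<Rightarrow> real^'d \<Rightarrow> nat \<Rightarrow> nat \<Rightarrow> 'd type_assignment \<Rightarrow> int^'d
     \<Rightarrow> ((int^'d) \<times> nat) set" where
  "black_preimage e v0 n N \<iota> y = {(x, a) \<in> lifts n N. black_site e v0 n x (\<iota> x a) = y}"

definition compatible_labels ::
  "(nat \<Rightarrow> real^'d) \<Rightarrow> real^'d \<Rightarrow> nat \<Rightarrow> nat \<Rightarrow> 'd type_assignment
     \<Rightarrow> ((int^'d) \<times> nat \<Rightarrow> nat) set" where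
  "compatible_labels e v0 n N \<iota> =
     {\<beta> \<in> lifts n N \<rightarrow>\<^sub>E {..<N}.
        \<forall>y \<in> torus_pts n. bij_betw \<beta> (black_preimage e v0 n N \<iota> y) {..<N}}"

definition matching_of ::
  "nat \<Rightarrow> nat \<Rightarrow> 'd type_assignment \<Rightarrow> ((int^'d) \<times> nat \<Rightarrow> nat)
     \<Rightarrow> (((int^'d) \<times> nat) \<times> nat \<times> nat) set" where
  "matching_of n N \<iota> \<beta> = (\<lambda>(x, a). ((x, a), \<iota> x a, \<beta> (x, a))) ` lifts n N"

lemma mem_matching_of:
  "((x, a), i, b) \<in> matching_of n N \<iota> \<beta> \<longleftrightarrow> (x, a) \<in> lifts n N \<and> i = \<iota> x a \<and> b = \<beta> (x, a)"
  unfolding matching_of_def by auto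

lemma matching_of_eq_imp_eq:
  assumes \<iota>: "\<iota> \<in> type_assignments D n N" "\<iota>' \<in> type_assignments D n N"
    and \<beta>: "\<beta> \<in> lifts n N \<rightarrow>\<^sub>E {..<N}" "\<beta>' \<in> lifts n N \<rightarrow>\<^sub>E {..<N}"
    and eq: "matching_of n N \<iota> \<beta> = matching_of n N \<iota>' \<beta>'"
  shows "\<iota> = \<iota>' \<and> \<beta> = \<beta>'"
proof -
  have agree: "\<iota> x a = \<iota>' x a \<and> \<beta> (x, a) = \<beta>' (x, a)" if "(x, a) \<in> lifts n N" for x a
  proof -
    have "((x, a), \<iota> x a, \<beta> (x, a)) \<in> matching_of n N \<iota>' \<beta>'"
      using that eq[symmetric] by (simp add: mem_matching_of)
    then show ?thesis
      by (simp add: mem_matching_of)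
  qed
  have "\<iota> x = \<iota>' x" if "x \<in> torus_pts n" for x
    using \<iota> that agree unfolding type_assignments_def by (intro PiE_ext[of _ "{..<N}" "\<lambda>_. {..<D}"]) auto
  then have "\<iota> = \<iota>'"
    using \<iota> unfolding type_assignments_def by (intro PiE_ext) auto
  moreover have "\<beta> = \<beta>'"
    using \<beta> agree by (intro PiE_ext) auto
  ultimately show ?thesis ..
qed

lemma inj_on_matching_of:
  "inj_on (\<lambda>(\<iota>, \<beta>). matching_of n N \<iota> \<beta>) (type_assignments D n N \<times> (lifts n N \<rightarrow>\<^sub>E {..<N}))"
  by (intro inj_onI) (auto dest: matching_of_eq_imp_eq)

lemma edge_black_matching_edge:
  "edge_black e v0 n ((x, a), i, b) = (black_site e v0 n x i, b)"
  unfolding edge_black_def black_site_def by simp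

lemma matching_of_in_perfect_matchings_iff:
  assumes n: "n \<ge> 1" and \<iota>: "\<iota> \<in> type_assignments D n N" and \<beta>: "\<beta> \<in> lifts n N \<rightarrow>\<^sub>E {..<N}"
  shows "matching_of n N \<iota> \<beta> \<in> perfect_matchings D e v0 n N \<longleftrightarrow> \<beta> \<in> compatible_labels e v0 n N \<iota>"
proof -
  define g where "g = (\<lambda>(x, a). ((x, a), \<iota> x a, \<beta> (x, a)))"
  have inj: "inj_on g (lifts n N)"
    unfolding g_def by (auto intro: inj_onI)
  have M: "matching_of n N \<iota> \<beta> = g ` lifts n N"
    unfolding matching_of_def g_def ..
  have sub: "matching_of n N \<iota> \<beta> \<subseteq> blowup_edges D n N"
    using \<iota> \<beta> unfolding M g_def blowup_edges_def type_assignments_def by (auto simp: PiE_iff)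
  have white: "\<exists>!t. t \<in> matching_of n N \<iota> \<beta> \<and> edge_white t = u" if "u \<in> lifts n N" for u
    using that unfolding M ex1_image_iff[OF inj] by (auto simp: g_def edge_white_def)
  have black: "(\<exists>!t. t \<in> matching_of n N \<iota> \<beta> \<and> edge_black e v0 n t = (y, b)) \<longleftrightarrow>
      (\<exists>!u. u \<in> black_preimage e v0 n N \<iota> y \<and> \<beta> u = b)" for y b
    unfolding M ex1_image_iff[OF inj] black_preimage_def
    by (rule arg_cong[where f=Ex1], rule ext) (auto simp: g_def edge_black_matching_edge)
  have image: "\<beta> ` black_preimage e v0 n N \<iota> y \<subseteq> {..<N}" for y
    using \<beta> unfolding black_preimage_def by auto
  have "matching_of n N \<iota> \<beta> \<in> perfect_matchings D e v0 n N \<longleftrightarrow>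
      (\<forall>v \<in> lifts n N. \<exists>!t. t \<in> matching_of n N \<iota> \<beta> \<and> edge_black e v0 n t = v)"
    unfolding perfect_matchings_def mem_Collect_eq using sub white by simp
  also have "\<dots> \<longleftrightarrow>
      (\<forall>y \<in> torus_pts n. \<forall>b \<in> {..<N}. \<exists>!u. u \<in> black_preimage e v0 n N \<iota> y \<and> \<beta> u = b)"
    unfolding split_paired_Ball_Sigma black ..
  also have "\<dots> \<longleftrightarrow> \<beta> \<in> compatible_labels e v0 n N \<iota>"
    using \<beta> image unfolding compatible_labels_def bij_betw_iff_ex1 by simp
  finally show ?thesis .
qed

lemma perfect_matching_eq_matching_of:
  assumes "\<tau> \<in> perfect_matchings D e v0 n N"
  obtains \<iota> \<beta> where "\<iota> \<in> type_assignments D n N" "\<beta> \<in> lifts n N \<rightarrow>\<^sub>E {..<N}"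
    "\<tau> = matching_of n N \<iota> \<beta>"
proof -
  have sub: "\<tau> \<subseteq> blowup_edges D n N"
    and white: "\<forall>u \<in> lifts n N. \<exists>!t. t \<in> \<tau> \<and> edge_white t = u"
    using assms unfolding perfect_matchings_def by auto
  obtain T where T: "\<forall>u \<in> lifts n N. T u \<in> \<tau> \<and> edge_white (T u) = u"
    using white by metis
  have T_edge: "T u = (u, fst (snd (T u)), snd (snd (T u))) \<and> fst (snd (T u)) < D \<and> snd (snd (T u)) < N"
    if "u \<in> lifts n N" for u
  proof -
    have "T u \<in> blowup_edges D n N" "fst (T u) = u"
      using T that sub unfolding edge_white_def by auto
    then show ?thesis
      unfolding blowup_edges_def by auto
  qed
  have T_white: "edge_white t \<in> lifts n N \<and> T (edge_white t) = t" if "t \<in> \<tau>" for t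
  proof -
    have "edge_white t \<in> lifts n N"
      using that sub unfolding blowup_edges_def edge_white_def by auto
    with that T white show ?thesis
      by metis
  qed
  define \<iota> where "\<iota> = (\<lambda>x \<in> torus_pts n. \<lambda>a \<in> {..<N}. fst (snd (T (x, a))))"
  define \<beta> where "\<beta> = (\<lambda>u \<in> lifts n N. snd (snd (T u)))"
  have "\<iota> \<in> type_assignments D n N"
    using T_edge unfolding \<iota>_def type_assignments_def by auto
  moreover have "\<beta> \<in> lifts n N \<rightarrow>\<^sub>E {..<N}"
    using T_edge unfolding \<beta>_def by auto
  moreover have "matching_of n N \<iota> \<beta> = T ` lifts n N"
    unfolding matching_of_def \<iota>_def \<beta>_def using T_edge by (intro image_cong) auto
  moreover have "T ` lifts n N = \<tau>"
    using T T_white by force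
  ultimately show ?thesis
    using that by simp
qed

lemma bij_betw_matching_of:
  assumes "n \<ge> 1"
  shows "bij_betw (\<lambda>(\<iota>, \<beta>). matching_of n N \<iota> \<beta>)
    (SIGMA \<iota>:type_assignments D n N. compatible_labels e v0 n N \<iota>) (perfect_matchings D e v0 n N)"
    (is "bij_betw ?f ?S ?M")
proof -
  have labels: "compatible_labels e v0 n N \<iota> \<subseteq> lifts n N \<rightarrow>\<^sub>E {..<N}" for \<iota>
    unfolding compatible_labels_def by blast
  note in_iff = matching_of_in_perfect_matchings_iff[OF assms]
  have "inj_on ?f ?S"
    by (intro inj_on_subset[OF inj_on_matching_of[of n N D]] Sigma_mono order_refl labels)
  moreover have "?f ` ?S = ?M"
  proof (intro equalityI subsetI)
    fix \<tau> assume "\<tau> \<in> ?f ` ?S"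
    then obtain \<iota> \<beta> where "\<iota> \<in> type_assignments D n N" "\<beta> \<in> compatible_labels e v0 n N \<iota>"
      "\<tau> = matching_of n N \<iota> \<beta>"
      by blast
    then show "\<tau> \<in> ?M"
      using subsetD[OF labels] by (simp add: in_iff)
  next
    fix \<tau> assume \<tau>: "\<tau> \<in> ?M"
    then obtain \<iota> \<beta> where "\<iota> \<in> type_assignments D n N" "\<beta> \<in> lifts n N \<rightarrow>\<^sub>E {..<N}"
      and \<tau>_eq: "\<tau> = matching_of n N \<iota> \<beta>"
      by (rule perfect_matching_eq_matching_of)
    with \<tau> have "(\<iota>, \<beta>) \<in> ?S"
      by (simp add: in_iff)
    then show "\<tau> \<in> ?f ` ?S"
      unfolding \<tau>_eq by (rule rev_image_eqI) simp
  qed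
  ultimately show ?thesis
    unfolding bij_betw_def ..
qed

definition balanced_assignments ::
  "nat \<Rightarrow> (nat \<Rightarrow> real^'d) \<Rightarrow> real^'d \<Rightarrow> nat \<Rightarrow> nat \<Rightarrow> 'd type_assignment set" where
  "balanced_assignments D e v0 n N =
     {\<iota> \<in> type_assignments D n N. \<forall>y \<in> torus_pts n. card (black_preimage e v0 n N \<iota> y) = N}"

definition assignment_weight :: "(nat \<Rightarrow> real) \<Rightarrow> nat \<Rightarrow> nat \<Rightarrow> ('d::finite) type_assignment \<Rightarrow> real" where
  "assignment_weight w n N \<iota> = (\<Prod>x \<in> torus_pts n. \<Prod>a<N. w (\<iota> x a))"

lemma finite_type_assignments: "finite (type_assignments D n N)"
  unfolding type_assignments_def by (intro finite_PiE finite_torus_pts) auto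

lemma finite_compatible_labels: "finite (compatible_labels e v0 n N \<iota>)"
proof (rule finite_subset)
  show "compatible_labels e v0 n N \<iota> \<subseteq> lifts n N \<rightarrow>\<^sub>E {..<N}"
    unfolding compatible_labels_def by blast
  show "finite (lifts n N \<rightarrow>\<^sub>E {..<N})"
    by (intro finite_PiE finite_cartesian_product finite_torus_pts) auto
qed

lemma card_compatible_labels:
  fixes e :: "nat \<Rightarrow> real^'d"
  assumes "n \<ge> 1"
  shows "card (compatible_labels e v0 n N \<iota>) =
    (if \<forall>y \<in> torus_pts n. card (black_preimage e v0 n N \<iota> y) = N then fact N ^ n ^ CARD('d) else 0)"
proof (cases "\<forall>y \<in> torus_pts n. card (black_preimage e v0 n N \<iota> y) = N")
  case True
  define f where "f = (\<lambda>(x, a). black_site e v0 n x (\<iota> x a))"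
  have fibers: "black_preimage e v0 n N \<iota> y = {u \<in> lifts n N. f u = y}" for y
    unfolding black_preimage_def f_def by auto
  have "f ` lifts n N \<subseteq> torus_pts n"
    using assms unfolding f_def black_site_def by (auto intro: tmod_in_torus_pts)
  then have "card {\<beta> \<in> lifts n N \<rightarrow>\<^sub>E {..<N}. \<forall>y \<in> torus_pts n. bij_betw \<beta> {u \<in> lifts n N. f u = y} {..<N}}
      = fact N ^ card (torus_pts n :: (int^'d) set)"
    using True unfolding fibers
    by (intro card_fiberwise_bijections finite_cartesian_product finite_torus_pts) auto
  then show ?thesis
    using True unfolding compatible_labels_def fibers card_torus_pts by simp
next
  case False
  then obtain y where y: "y \<in> torus_pts n" "card (black_preimage e v0 n N \<iota> y) \<noteq> N"
    by blast
  then have "\<not> bij_betw \<beta> (black_preimage e v0 n N \<iota> y) {..<N}" for \<beta>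
    using bij_betw_same_card by fastforce
  then have "compatible_labels e v0 n N \<iota> = {}"
    using y(1) unfolding compatible_labels_def by blast
  with False show ?thesis
    by simp
qed

lemma match_weight_matching_of: "match_weight w (matching_of n N \<iota> \<beta>) = assignment_weight w n N \<iota>"
proof -
  have inj: "inj_on (\<lambda>(x, a). ((x, a), \<iota> x a, \<beta> (x, a))) (lifts n N)"
    by (auto intro: inj_onI)
  have "match_weight w (matching_of n N \<iota> \<beta>) =
      (\<Prod>u \<in> lifts n N. w (edge_type ((\<lambda>(x, a). ((x, a), \<iota> x a, \<beta> (x, a))) u)))"
    unfolding match_weight_def matching_of_def by (rule prod.reindex[OF inj, unfolded comp_def])
  also have "\<dots> = (\<Prod>(x, a) \<in> lifts n N. w (\<iota> x a))"
    by (intro prod.cong refl) (auto simp: edge_type_def)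
  finally show ?thesis
    unfolding assignment_weight_def prod.cartesian_product .
qed

lemma sum_perfect_matchings:
  fixes e :: "nat \<Rightarrow> real^'d" and g :: "real \<Rightarrow> real"
  assumes "n \<ge> 1"
  shows "(\<Sum>\<tau> \<in> perfect_matchings D e v0 n N. g (match_weight w \<tau>)) =
    fact N ^ n ^ CARD('d) * (\<Sum>\<iota> \<in> balanced_assignments D e v0 n N. g (assignment_weight w n N \<iota>))"
proof -
  have "(\<Sum>\<tau> \<in> perfect_matchings D e v0 n N. g (match_weight w \<tau>)) =
      (\<Sum>(\<iota>, \<beta>) \<in> (SIGMA \<iota>:type_assignments D n N. compatible_labels e v0 n N \<iota>).
         g (match_weight w (matching_of n N \<iota> \<beta>)))"
    by (subst sum.reindex_bij_betw[OF bij_betw_matching_of[OF assms], symmetric]) (simp add: case_prod_beta)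
  also have "\<dots> = (\<Sum>\<iota> \<in> type_assignments D n N. \<Sum>\<beta> \<in> compatible_labels e v0 n N \<iota>. g (assignment_weight w n N \<iota>))"
    by (subst sum.Sigma) (simp_all add: finite_type_assignments finite_compatible_labels match_weight_matching_of)
  also have "\<dots> = (\<Sum>\<iota> \<in> type_assignments D n N.
      (if \<iota> \<in> balanced_assignments D e v0 n N then fact N ^ n ^ CARD('d) else 0) * g (assignment_weight w n N \<iota>))"
    using card_compatible_labels[OF assms, of e v0 N] by (intro sum.cong refl) (simp add: balanced_assignments_def)
  also have "\<dots> = fact N ^ n ^ CARD('d) * (\<Sum>\<iota> \<in> balanced_assignments D e v0 n N. g (assignment_weight w n N \<iota>))"
    unfolding balanced_assignments_def sum_distrib_left
    by (auto simp: sum.inter_filter finite_type_assignments intro!: sum.cong)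
  finally show ?thesis .
qed

definition balanced_weight ::
  "nat \<Rightarrow> (nat \<Rightarrow> real^'d) \<Rightarrow> real^'d \<Rightarrow> (nat \<Rightarrow> real) \<Rightarrow> nat \<Rightarrow> nat \<Rightarrow> real" where
  "balanced_weight D e v0 w n N =
     (\<Sum>\<iota> \<in> balanced_assignments D e v0 n N. assignment_weight w n N \<iota>)"

definition balanced_log_weight ::
  "nat \<Rightarrow> (nat \<Rightarrow> real^'d) \<Rightarrow> real^'d \<Rightarrow> (nat \<Rightarrow> real) \<Rightarrow> nat \<Rightarrow> nat \<Rightarrow> real" where
  "balanced_log_weight D e v0 w n N =
     (\<Sum>\<iota> \<in> balanced_assignments D e v0 n N. assignment_weight w n N \<iota> * ln (assignment_weight w n N \<iota>))"

lemma match_weight_nonneg: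
  assumes "\<tau> \<in> perfect_matchings D e v0 n N" "\<forall>i<D. 0 \<le> w i"
  shows "0 \<le> match_weight w \<tau>"
proof -
  have "edge_type t < D" if "t \<in> \<tau>" for t
    using assms(1) that unfolding perfect_matchings_def blowup_edges_def edge_type_def by auto
  then show ?thesis
    unfolding match_weight_def using assms(2) by (intro prod_nonneg) auto
qed

lemma boltzmann_entropy_eq:
  fixes e :: "nat \<Rightarrow> real^'d"
  assumes n: "n \<ge> 1" and w: "\<forall>i<D. 0 \<le> w i" and A: "0 < balanced_weight D e v0 w n N"
  shows "boltzmann_entropy D e v0 w n N - real (n ^ CARD('d)) * ln (fact N) =
    ln (balanced_weight D e v0 w n N) - balanced_log_weight D e v0 w n N / balanced_weight D e v0 w n N"
proof -
  let ?F = "fact N ^ n ^ CARD('d) :: real"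
  let ?A = "balanced_weight D e v0 w n N"
  let ?M = "perfect_matchings D e v0 n N"
  have finite: "finite ?M"
    using bij_betw_finite[OF bij_betw_matching_of[OF n]] finite_type_assignments finite_compatible_labels
    by blast
  have Z: "partition_fn D e v0 w n N = ?F * ?A"
    using sum_perfect_matchings[OF n, where g = "\<lambda>v. v"]
    unfolding partition_fn_def balanced_weight_def by simp
  have "boltzmann_entropy D e v0 w n N = ln (partition_fn D e v0 w n N) -
      (\<Sum>\<tau> \<in> ?M. match_weight w \<tau> * ln (match_weight w \<tau>)) / partition_fn D e v0 w n N"
    using entropy_of_normalized_weights[OF finite, of "match_weight w"] match_weight_nonneg[OF _ w, of _ e v0 n N]
    unfolding boltzmann_entropy_def boltzmann_def partition_fn_def by simp
  also have "(\<Sum>\<tau> \<in> ?M. match_weight w \<tau> * ln (match_weight w \<tau>)) = ?F * balanced_log_weight D e v0 w n N"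
    unfolding balanced_log_weight_def by (rule sum_perfect_matchings[OF n, where g = "\<lambda>v. v * ln v"])
  also have "ln (partition_fn D e v0 w n N) = real (n ^ CARD('d)) * ln (fact N) + ln ?A"
    unfolding Z using A by (simp add: ln_mult ln_realpow)
  finally show ?thesis
    unfolding Z by simp
qed

section \<open>The weight of the balanced type assignments\<close>

lemma sum_type_assignments_prod:
  fixes f :: "nat \<Rightarrow> 'a::comm_semiring_1"
  shows "(\<Sum>(\<iota> :: ('d::finite) type_assignment) \<in> type_assignments D n N. \<Prod>x \<in> torus_pts n. \<Prod>a<N. f (\<iota> x a))
    = (\<Sum>j<D. f j) ^ (n ^ CARD('d) * N)"
proof -
  have "(\<Sum>(\<iota> :: 'd type_assignment) \<in> type_assignments D n N. \<Prod>x \<in> torus_pts n. \<Prod>a<N. f (\<iota> x a))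
      = (\<Prod>x \<in> (torus_pts n :: (int^'d) set). \<Sum>g \<in> {..<N} \<rightarrow>\<^sub>E {..<D}. \<Prod>a<N. f (g a))"
    unfolding type_assignments_def by (rule prod_sum_PiE[symmetric]) (auto simp: finite_torus_pts finite_PiE)
  also have "\<dots> = (\<Prod>x \<in> (torus_pts n :: (int^'d) set). \<Prod>a<N. \<Sum>j<D. f j)"
    by (intro prod.cong refl prod_sum_PiE[symmetric]) auto
  also have "\<dots> = (\<Sum>j<D. f j) ^ (n ^ CARD('d) * N)"
    by (simp add: card_torus_pts power_mult[symmetric] mult.commute)
  finally show ?thesis .
qed

lemma assignment_weight_pos:
  assumes "\<forall>i<D. 0 < w i" "\<iota> \<in> type_assignments D n N"
  shows "0 < assignment_weight w n N \<iota>"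
  using assms unfolding assignment_weight_def type_assignments_def by (intro prod_pos) auto

lemma balanced_weight_le:
  fixes e :: "nat \<Rightarrow> real^'d"
  assumes "\<forall>i<D. 0 < w i"
  shows "balanced_weight D e v0 w n N \<le> (\<Sum>j<D. w j) ^ (n ^ CARD('d) * N)"
proof -
  have "balanced_weight D e v0 w n N \<le> (\<Sum>(\<iota> :: 'd type_assignment) \<in> type_assignments D n N. assignment_weight w n N \<iota>)"
    unfolding balanced_weight_def balanced_assignments_def
    using assignment_weight_pos[OF assms] by (intro sum_mono2 finite_type_assignments) (auto intro: less_imp_le)
  also have "\<dots> = (\<Sum>j<D. w j) ^ (n ^ CARD('d) * N)"
    unfolding assignment_weight_def by (rule sum_type_assignments_prod)
  finally show ?thesis .
qed

definition type_count :: "nat \<Rightarrow> nat \<Rightarrow> (nat \<Rightarrow> nat) \<Rightarrow> nat \<Rightarrow> nat" where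
  "type_count D N g = (\<lambda>i \<in> {..<D}. card {a \<in> {..<N}. g a = i})"

lemma sum_type_count:
  assumes "g \<in> {..<N} \<rightarrow>\<^sub>E {..<D}"
  shows "(\<Sum>i<D. type_count D N g i) = N"
proof -
  have "(\<Sum>i<D. type_count D N g i) = card (\<Union>i<D. {a \<in> {..<N}. g a = i})"
    unfolding type_count_def by (subst card_UN_disjoint) auto
  also have "(\<Union>i<D. {a \<in> {..<N}. g a = i}) = {..<N}"
    using assms by auto
  finally show ?thesis
    by simp
qed

lemma card_type_count_image_le: "card (type_count D N ` ({..<N} \<rightarrow>\<^sub>E {..<D})) \<le> (N + 1) ^ D"
proof -
  have "type_count D N ` ({..<N} \<rightarrow>\<^sub>E {..<D}) \<subseteq> {..<D} \<rightarrow>\<^sub>E {..N}"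
  proof clarify
    fix g :: "nat \<Rightarrow> nat"
    have "card {a \<in> {..<N}. g a = i} \<le> N" for i
      using card_mono[of "{..<N}" "{a \<in> {..<N}. g a = i}"] by auto
    then show "type_count D N g \<in> {..<D} \<rightarrow>\<^sub>E {..N}"
      unfolding type_count_def by auto
  qed
  then show ?thesis
    using card_mono[of "{..<D} \<rightarrow>\<^sub>E {..N}"] by (simp add: card_PiE finite_PiE)
qed

(* Pigeonhole over the at most (N+1)^D type counts of the words g. *)
lemma exists_heavy_type_count:
  fixes w :: "nat \<Rightarrow> real"
  assumes D: "D \<ge> 1" and w: "\<forall>i<D. 0 \<le> w i"
  shows "\<exists>c. (\<Sum>i<D. c i) = N \<and>
    (\<Sum>j<D. w j) ^ N / real (N + 1) ^ D \<le> (\<Sum>g \<in> {g \<in> {..<N} \<rightarrow>\<^sub>E {..<D}. type_count D N g = c}. \<Prod>a<N. w (g a))"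
proof -
  let ?G = "{..<N} \<rightarrow>\<^sub>E {..<D}"
  define h where "h c = (\<Sum>g \<in> {g \<in> ?G. type_count D N g = c}. \<Prod>a<N. w (g a))" for c
  have finite_G: "finite ?G"
    by (intro finite_PiE) auto
  have "(\<lambda>a \<in> {..<N}. 0) \<in> ?G"
    using D by auto
  then obtain c where c: "c \<in> type_count D N ` ?G"
    and c_heavy: "(\<Sum>c' \<in> type_count D N ` ?G. h c') \<le> real (card (type_count D N ` ?G)) * h c"
    using exists_sum_le_card_mult[of "type_count D N ` ?G" h] finite_G by blast
  have "(\<Sum>j<D. w j) ^ N = (\<Sum>g \<in> ?G. \<Prod>a<N. w (g a))"
    using prod_sum_PiE[of "{..<N}" "\<lambda>_. {..<D}" "\<lambda>_ j. w j"] by simp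
  also have "\<dots> = (\<Sum>c' \<in> type_count D N ` ?G. h c')"
    unfolding h_def by (rule sum.image_gen[OF finite_G])
  also have "\<dots> \<le> real ((N + 1) ^ D) * h c"
  proof (rule order_trans[OF c_heavy mult_right_mono])
    show "0 \<le> h c"
      unfolding h_def using w by (intro sum_nonneg prod_nonneg) (auto simp: PiE_iff)
  qed (use card_type_count_image_le in \<open>simp only: of_nat_le_iff\<close>)
  finally have "(\<Sum>j<D. w j) ^ N / real (N + 1) ^ D \<le> h c"
    by (simp add: divide_le_eq mult.commute)
  moreover obtain g where "g \<in> ?G" "c = type_count D N g"
    using c by blast
  then have "(\<Sum>i<D. c i) = N"
    using sum_type_count by blast
  ultimately show ?thesis
    unfolding h_def by blast
qed

lemma black_preimage_eq_Union:
  assumes n: "n \<ge> 1" and \<iota>: "\<iota> \<in> type_assignments D n N" and y: "y \<in> torus_pts n"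
  shows "black_preimage e v0 n N \<iota> y =
    (\<Union>i<D. (\<lambda>a. (tmod n (y - offset e v0 i), a)) ` {a \<in> {..<N}. \<iota> (tmod n (y - offset e v0 i)) a = i})"
proof (intro equalityI subsetI)
  fix u assume "u \<in> black_preimage e v0 n N \<iota> y"
  then obtain x a where u: "u = (x, a)" "x \<in> torus_pts n" "a < N" "tmod n (x + offset e v0 (\<iota> x a)) = y"
    unfolding black_preimage_def black_site_def by blast
  then have "x = tmod n (y - offset e v0 (\<iota> x a))" "\<iota> x a < D"
    using tmod_add_eq_iff[OF n] \<iota> unfolding type_assignments_def by auto
  with u show "u \<in> (\<Union>i<D. (\<lambda>a. (tmod n (y - offset e v0 i), a)) ` {a \<in> {..<N}. \<iota> (tmod n (y - offset e v0 i)) a = i})"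
    by (intro UN_I[of "\<iota> x a"]) auto
next
  fix u assume "u \<in> (\<Union>i<D. (\<lambda>a. (tmod n (y - offset e v0 i), a)) ` {a \<in> {..<N}. \<iota> (tmod n (y - offset e v0 i)) a = i})"
  then obtain i a where u: "u = (tmod n (y - offset e v0 i), a)" "a < N" "\<iota> (tmod n (y - offset e v0 i)) a = i"
    by blast
  have "tmod n (tmod n (y - offset e v0 i) + offset e v0 i) = y"
    using tmod_add_eq_iff[OF n tmod_in_torus_pts[OF n]] y by blast
  with u show "u \<in> black_preimage e v0 n N \<iota> y"
    unfolding black_preimage_def black_site_def using tmod_in_torus_pts[OF n] by auto
qed

lemma card_black_preimage:
  assumes "n \<ge> 1" "\<iota> \<in> type_assignments D n N" "y \<in> torus_pts n"
  shows "card (black_preimage e v0 n N \<iota> y) =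
    (\<Sum>i<D. card {a \<in> {..<N}. \<iota> (tmod n (y - offset e v0 i)) a = i})"
  unfolding black_preimage_eq_Union[OF assms] by (subst card_UN_disjoint) (auto simp: card_image inj_on_def)

(* If every white vertex uses type i exactly c i times, then every black vertex y receives c i edges
  of type i, all from the white vertex y - k_i. *)
lemma uniform_type_count_imp_balanced:
  assumes n: "n \<ge> 1"
    and \<iota>: "\<iota> \<in> torus_pts n \<rightarrow>\<^sub>E {g \<in> {..<N} \<rightarrow>\<^sub>E {..<D}. type_count D N g = c}"
    and c: "(\<Sum>i<D. c i) = N"
  shows "\<iota> \<in> balanced_assignments D e v0 n N"
proof -
  have \<iota>_type: "\<iota> \<in> type_assignments D n N"
    using \<iota> unfolding type_assignments_def by (auto simp: PiE_iff)
  have "card (black_preimage e v0 n N \<iota> y) = N" if y: "y \<in> torus_pts n" for y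
  proof -
    have "card {a \<in> {..<N}. \<iota> (tmod n (y - offset e v0 i)) a = i} = c i" if "i < D" for i
    proof -
      have "type_count D N (\<iota> (tmod n (y - offset e v0 i))) = c"
        using PiE_mem[OF \<iota> tmod_in_torus_pts[OF n]] by simp
      then show ?thesis
        using that unfolding type_count_def by (auto dest: fun_cong[of _ _ i])
    qed
    then show ?thesis
      unfolding card_black_preimage[OF n \<iota>_type y] using c by simp
  qed
  with \<iota>_type show ?thesis
    unfolding balanced_assignments_def by blast
qed

lemma balanced_weight_ge:
  fixes e :: "nat \<Rightarrow> real^'d"
  assumes n: "n \<ge> 1" and D: "D \<ge> 1" and w: "\<forall>i<D. 0 < w i"
  shows "(\<Sum>j<D. w j) ^ (n ^ CARD('d) * N) / real (N + 1) ^ (D * n ^ CARD('d)) \<le> balanced_weight D e v0 w n N"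
proof -
  let ?W = "\<Sum>j<D. w j"
  have "0 \<le> ?W"
    using w by (intro sum_nonneg) (auto intro: less_imp_le)
  obtain c where c: "(\<Sum>i<D. c i) = N"
    and heavy: "?W ^ N / real (N + 1) ^ D \<le> (\<Sum>g \<in> {g \<in> {..<N} \<rightarrow>\<^sub>E {..<D}. type_count D N g = c}. \<Prod>a<N. w (g a))"
    using exists_heavy_type_count[OF D] w by (meson less_imp_le)
  define M where "M = (torus_pts n :: (int^'d) set) \<rightarrow>\<^sub>E {g \<in> {..<N} \<rightarrow>\<^sub>E {..<D}. type_count D N g = c}"
  have "?W ^ (n ^ CARD('d) * N) / real (N + 1) ^ (D * n ^ CARD('d)) = (?W ^ N / real (N + 1) ^ D) ^ n ^ CARD('d)"
    by (simp add: power_divide power_mult[symmetric] mult.commute)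
  also have "\<dots> \<le> (\<Sum>g \<in> {g \<in> {..<N} \<rightarrow>\<^sub>E {..<D}. type_count D N g = c}. \<Prod>a<N. w (g a)) ^ n ^ CARD('d)"
    using heavy \<open>0 \<le> ?W\<close> by (intro power_mono) simp_all
  also have "\<dots> = (\<Prod>x \<in> (torus_pts n :: (int^'d) set).
      \<Sum>g \<in> {g \<in> {..<N} \<rightarrow>\<^sub>E {..<D}. type_count D N g = c}. \<Prod>a<N. w (g a))"
    by (simp add: card_torus_pts)
  also have "\<dots> = (\<Sum>\<iota> \<in> M. assignment_weight w n N \<iota>)"
    unfolding M_def assignment_weight_def by (rule prod_sum_PiE) (auto simp: finite_torus_pts finite_PiE)
  also have "\<dots> \<le> balanced_weight D e v0 w n N"
    unfolding balanced_weight_def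
  proof (rule sum_mono2)
    show "M \<subseteq> balanced_assignments D e v0 n N"
      unfolding M_def using uniform_type_count_imp_balanced[OF n _ c] by blast
    show "0 \<le> assignment_weight w n N \<iota>" if "\<iota> \<in> balanced_assignments D e v0 n N - M" for \<iota>
      using that assignment_weight_pos[OF w] unfolding balanced_assignments_def by (auto intro: less_imp_le)
  qed (simp add: balanced_assignments_def finite_type_assignments)
  finally show ?thesis .
qed

lemma balanced_weight_pos:
  fixes e :: "nat \<Rightarrow> real^'d"
  assumes "n \<ge> 1" "D \<ge> 1" "\<forall>i<D. 0 < w i"
  shows "0 < balanced_weight D e v0 w n N"
proof -
  have "0 < (\<Sum>j<D. w j) ^ (n ^ CARD('d) * N) / real (N + 1) ^ (D * n ^ CARD('d))"
    using sum_lessThan_pos[OF assms(2,3)] by simp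
  with balanced_weight_ge[OF assms, of N e v0] show ?thesis
    by linarith
qed

section \<open>Concentration of the log-weight\<close>

definition assignment_sum :: "(nat \<Rightarrow> real) \<Rightarrow> nat \<Rightarrow> nat \<Rightarrow> ('d::finite) type_assignment \<Rightarrow> real" where
  "assignment_sum f n N \<iota> = (\<Sum>x \<in> torus_pts n. \<Sum>a<N. f (\<iota> x a))"

lemma ln_assignment_weight:
  assumes "\<forall>i<D. 0 < w i" "\<iota> \<in> type_assignments D n N"
  shows "ln (assignment_weight w n N \<iota>) = assignment_sum (\<lambda>j. ln (w j)) n N \<iota>"
proof -
  have pos: "0 < w (\<iota> x a)" if "x \<in> torus_pts n" "a < N" for x a
    using assms that unfolding type_assignments_def by auto
  then have nonzero: "w (\<iota> x a) \<noteq> 0" if "x \<in> torus_pts n" "a < N" for x a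
    using that by force
  have "ln (assignment_weight w n N \<iota>) = (\<Sum>x \<in> torus_pts n. ln (\<Prod>a<N. w (\<iota> x a)))"
    unfolding assignment_weight_def using pos
    by (intro ln_prod finite_torus_pts) (simp add: prod_pos less_imp_neq[symmetric])
  also have "\<dots> = assignment_sum (\<lambda>j. ln (w j)) n N \<iota>"
    unfolding assignment_sum_def using nonzero by (intro sum.cong refl ln_prod) auto
  finally show ?thesis .
qed

lemma assignment_weight_mult_exp:
  "assignment_weight w n N \<iota> * exp (s * assignment_sum l n N \<iota>) =
    (\<Prod>x \<in> torus_pts n. \<Prod>a<N. w (\<iota> x a) * exp (s * l (\<iota> x a)))"
  unfolding assignment_weight_def assignment_sum_def
  by (simp add: exp_sum finite_torus_pts prod.distrib sum_distrib_left)

lemma abs_assignment_sum_le: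
  fixes \<iota> :: "('d::finite) type_assignment"
  assumes "\<iota> \<in> type_assignments D n N" "\<forall>j<D. \<bar>l j\<bar> \<le> K"
  shows "\<bar>assignment_sum l n N \<iota>\<bar> \<le> K * real (n ^ CARD('d) * N)"
proof -
  have "\<bar>assignment_sum l n N \<iota>\<bar> \<le> (\<Sum>x \<in> torus_pts n. \<Sum>a<N. \<bar>l (\<iota> x a)\<bar>)"
    unfolding assignment_sum_def by (rule order_trans[OF sum_abs sum_mono[OF sum_abs]])
  also have "\<dots> \<le> (\<Sum>x \<in> (torus_pts n :: (int^'d) set). \<Sum>a<N. K)"
    using assms unfolding type_assignments_def by (intro sum_mono) auto
  also have "\<dots> = K * real (n ^ CARD('d) * N)"
    by (simp add: card_torus_pts)
  finally show ?thesis .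
qed

lemma upper_deviation_bound:
  fixes l w :: "nat \<Rightarrow> real"
  assumes D: "D \<ge> 1" and w: "\<forall>i<D. 0 < w i" and \<epsilon>: "0 < \<epsilon>"
  shows "\<exists>\<rho>. 0 < \<rho> \<and> \<rho> < 1 \<and> (\<forall>n N.
    (\<Sum>\<iota> \<in> {\<iota> \<in> (type_assignments D n N :: ('d::finite) type_assignment set).
        ((\<Sum>j<D. w j * l j) / (\<Sum>j<D. w j) + \<epsilon>) * real (n ^ CARD('d) * N) \<le> assignment_sum l n N \<iota>}.
       assignment_weight w n N \<iota>)
    \<le> ((\<Sum>j<D. w j) * \<rho>) ^ (n ^ CARD('d) * N))"
proof -
  define W where "W = (\<Sum>j<D. w j)"
  have W: "0 < W"
    unfolding W_def using D w by (rule sum_lessThan_pos)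
  define q where "q j = w j / W" for j
  have q: "(\<Sum>j<D. q j) = 1"
    unfolding q_def using W by (simp add: sum_divide_distrib[symmetric] W_def)
  define \<mu> where "\<mu> = (\<Sum>j<D. w j * l j) / W"
  have \<mu>: "\<mu> = (\<Sum>j<D. q j * l j)"
    unfolding \<mu>_def q_def by (simp add: sum_divide_distrib)
  obtain s where s: "0 < s" and rate: "(\<Sum>j<D. q j * exp (s * (l j - \<mu> - \<epsilon>))) < 1"
    using exists_chernoff_exponent[OF q \<epsilon>, of l] unfolding \<mu> by blast
  define \<rho> where "\<rho> = (\<Sum>j<D. q j * exp (s * (l j - \<mu> - \<epsilon>)))"
  have "0 < \<rho>"
    unfolding \<rho>_def q_def using D w W by (intro sum_lessThan_pos) auto
  moreover have "\<rho> < 1"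
    using rate unfolding \<rho>_def .
  moreover have "(\<Sum>\<iota> \<in> {\<iota> \<in> (type_assignments D n N :: 'd type_assignment set).
        (\<mu> + \<epsilon>) * real (n ^ CARD('d) * N) \<le> assignment_sum l n N \<iota>}. assignment_weight w n N \<iota>)
      \<le> (W * \<rho>) ^ (n ^ CARD('d) * N)" for n N
  proof -
    let ?m = "n ^ CARD('d) * N"
    have "(\<Sum>\<iota> \<in> {\<iota> \<in> (type_assignments D n N :: 'd type_assignment set).
          (\<mu> + \<epsilon>) * ?m \<le> assignment_sum l n N \<iota>}. assignment_weight w n N \<iota>)
        \<le> exp (- s * ((\<mu> + \<epsilon>) * ?m)) *
          (\<Sum>\<iota> \<in> (type_assignments D n N :: 'd type_assignment set).
             assignment_weight w n N \<iota> * exp (s * assignment_sum l n N \<iota>))"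
      using assignment_weight_pos[OF w] s
      by (intro exponential_markov_bound finite_type_assignments) (auto intro: less_imp_le)
    also have "(\<Sum>\<iota> \<in> (type_assignments D n N :: 'd type_assignment set).
        assignment_weight w n N \<iota> * exp (s * assignment_sum l n N \<iota>)) = (\<Sum>j<D. w j * exp (s * l j)) ^ ?m"
      unfolding assignment_weight_mult_exp by (rule sum_type_assignments_prod)
    also have "exp (- s * ((\<mu> + \<epsilon>) * ?m)) * (\<Sum>j<D. w j * exp (s * l j)) ^ ?m
        = (exp (- s * (\<mu> + \<epsilon>)) * (\<Sum>j<D. w j * exp (s * l j))) ^ ?m"
      by (simp add: power_mult_distrib exp_of_nat_mult[symmetric] mult.commute mult.left_commute)
    also have "exp (- s * (\<mu> + \<epsilon>)) * (\<Sum>j<D. w j * exp (s * l j)) = W * \<rho>"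
    proof -
      have "exp (- s * (\<mu> + \<epsilon>)) * (w j * exp (s * l j)) = W * (w j / W * exp (s * (l j - \<mu> - \<epsilon>)))" for j
        using W by (simp add: field_simps flip: exp_add)
      then show ?thesis
        unfolding \<rho>_def q_def sum_distrib_left by simp
    qed
    finally show ?thesis .
  qed
  ultimately show ?thesis
    unfolding \<mu>_def W_def by blast
qed

lemma deviation_bound:
  fixes l w :: "nat \<Rightarrow> real"
  assumes D: "D \<ge> 1" and w: "\<forall>i<D. 0 < w i" and \<epsilon>: "0 < \<epsilon>"
  shows "\<exists>\<rho>. 0 < \<rho> \<and> \<rho> < 1 \<and> (\<forall>n N.
    (\<Sum>\<iota> \<in> {\<iota> \<in> (type_assignments D n N :: ('d::finite) type_assignment set).
        \<epsilon> * real (n ^ CARD('d) * N) \<le>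
        \<bar>assignment_sum l n N \<iota> - (\<Sum>j<D. w j * l j) / (\<Sum>j<D. w j) * real (n ^ CARD('d) * N)\<bar>}.
       assignment_weight w n N \<iota>)
    \<le> 2 * ((\<Sum>j<D. w j) * \<rho>) ^ (n ^ CARD('d) * N))"
proof -
  define W where "W = (\<Sum>j<D. w j)"
  define \<mu> where "\<mu> = (\<Sum>j<D. w j * l j) / W"
  obtain \<rho>\<^sub>1 where \<rho>\<^sub>1: "0 < \<rho>\<^sub>1" "\<rho>\<^sub>1 < 1" and upper: "\<And>n N.
    (\<Sum>\<iota> \<in> {\<iota> \<in> (type_assignments D n N :: 'd type_assignment set).
        (\<mu> + \<epsilon>) * real (n ^ CARD('d) * N) \<le> assignment_sum l n N \<iota>}. assignment_weight w n N \<iota>)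
    \<le> (W * \<rho>\<^sub>1) ^ (n ^ CARD('d) * N)"
    using upper_deviation_bound[OF D w \<epsilon>, of l, where 'd = 'd] unfolding \<mu>_def W_def by blast
  obtain \<rho>\<^sub>2 where \<rho>\<^sub>2: "0 < \<rho>\<^sub>2" "\<rho>\<^sub>2 < 1" and lower: "\<And>n N.
    (\<Sum>\<iota> \<in> {\<iota> \<in> (type_assignments D n N :: 'd type_assignment set).
        (- \<mu> + \<epsilon>) * real (n ^ CARD('d) * N) \<le> assignment_sum (\<lambda>j. - l j) n N \<iota>}. assignment_weight w n N \<iota>)
    \<le> (W * \<rho>\<^sub>2) ^ (n ^ CARD('d) * N)"
    using upper_deviation_bound[OF D w \<epsilon>, of "\<lambda>j. - l j", where 'd = 'd] unfolding \<mu>_def W_def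
    by (simp add: sum_negf, blast)
  define \<rho> where "\<rho> = max \<rho>\<^sub>1 \<rho>\<^sub>2"
  have W: "0 < W"
    unfolding W_def using D w by (rule sum_lessThan_pos)
  have bound: "\<forall>n N. (\<Sum>\<iota> \<in> {\<iota> \<in> (type_assignments D n N :: 'd type_assignment set).
        \<epsilon> * real (n ^ CARD('d) * N) \<le> \<bar>assignment_sum l n N \<iota> - \<mu> * real (n ^ CARD('d) * N)\<bar>}.
       assignment_weight w n N \<iota>)
    \<le> 2 * (W * \<rho>) ^ (n ^ CARD('d) * N)"
  proof (intro allI)
    fix n N
    let ?m = "real (n ^ CARD('d) * N)"
    let ?I = "type_assignments D n N :: 'd type_assignment set"
    let ?aw = "assignment_weight w n N"
    define B\<^sub>1 where "B\<^sub>1 = {\<iota> \<in> ?I. (\<mu> + \<epsilon>) * ?m \<le> assignment_sum l n N \<iota>}"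
    define B\<^sub>2 where "B\<^sub>2 = {\<iota> \<in> ?I. (- \<mu> + \<epsilon>) * ?m \<le> assignment_sum (\<lambda>j. - l j) n N \<iota>}"
    have nonneg: "0 \<le> ?aw \<iota>" if "\<iota> \<in> ?I" for \<iota>
      using assignment_weight_pos[OF w that] by simp
    have finite: "finite B\<^sub>1" "finite B\<^sub>2"
      unfolding B\<^sub>1_def B\<^sub>2_def by (auto intro: rev_finite_subset[OF finite_type_assignments])
    have "assignment_sum (\<lambda>j. - l j) n N \<iota> = - assignment_sum l n N \<iota>" for \<iota> :: "'d type_assignment"
      unfolding assignment_sum_def by (simp add: sum_negf)
    then have "{\<iota> \<in> ?I. \<epsilon> * ?m \<le> \<bar>assignment_sum l n N \<iota> - \<mu> * ?m\<bar>} \<subseteq> B\<^sub>1 \<union> B\<^sub>2"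
      unfolding B\<^sub>1_def B\<^sub>2_def by (auto simp: algebra_simps abs_if split: if_splits)
    then have "(\<Sum>\<iota> \<in> {\<iota> \<in> ?I. \<epsilon> * ?m \<le> \<bar>assignment_sum l n N \<iota> - \<mu> * ?m\<bar>}. ?aw \<iota>)
        \<le> (\<Sum>\<iota> \<in> B\<^sub>1. ?aw \<iota>) + (\<Sum>\<iota> \<in> B\<^sub>2. ?aw \<iota>)"
      using nonneg by (intro sum_le_sum_Un finite) (auto simp: B\<^sub>1_def B\<^sub>2_def)
    also have "\<dots> \<le> (W * \<rho>) ^ (n ^ CARD('d) * N) + (W * \<rho>) ^ (n ^ CARD('d) * N)"
    proof (rule add_mono)
      have "(W * \<rho>\<^sub>1) ^ (n ^ CARD('d) * N) \<le> (W * \<rho>) ^ (n ^ CARD('d) * N)"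
        using W \<rho>\<^sub>1 unfolding \<rho>_def by (intro power_mono mult_left_mono) auto
      then show "(\<Sum>\<iota> \<in> B\<^sub>1. ?aw \<iota>) \<le> (W * \<rho>) ^ (n ^ CARD('d) * N)"
        using upper[of n N] unfolding B\<^sub>1_def by linarith
      have "(W * \<rho>\<^sub>2) ^ (n ^ CARD('d) * N) \<le> (W * \<rho>) ^ (n ^ CARD('d) * N)"
        using W \<rho>\<^sub>2 unfolding \<rho>_def by (intro power_mono mult_left_mono) auto
      then show "(\<Sum>\<iota> \<in> B\<^sub>2. ?aw \<iota>) \<le> (W * \<rho>) ^ (n ^ CARD('d) * N)"
        using lower[of n N] unfolding B\<^sub>2_def by linarith
    qed
    finally show "(\<Sum>\<iota> \<in> {\<iota> \<in> ?I. \<epsilon> * ?m \<le> \<bar>assignment_sum l n N \<iota> - \<mu> * ?m\<bar>}. ?aw \<iota>)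
        \<le> 2 * (W * \<rho>) ^ (n ^ CARD('d) * N)"
      by simp
  qed
  have "0 < \<rho>" "\<rho> < 1"
    using \<rho>\<^sub>1 \<rho>\<^sub>2 unfolding \<rho>_def by auto
  then show ?thesis
    using bound unfolding \<mu>_def W_def by (intro exI[of _ \<rho>] conjI)
qed

lemma abs_balanced_log_weight_centered_le:
  fixes e :: "nat \<Rightarrow> real^'d" and n N :: nat
  assumes D: "D \<ge> 1" and w: "\<forall>i<D. 0 < w i" and \<epsilon>: "0 < \<epsilon>"
  defines "\<mu> \<equiv> (\<Sum>j<D. w j * ln (w j)) / (\<Sum>j<D. w j)"
    and "K \<equiv> \<Sum>j<D. \<bar>ln (w j)\<bar>" and "m \<equiv> n ^ CARD('d) * N"
  shows "\<bar>balanced_log_weight D e v0 w n N - \<mu> * real m * balanced_weight D e v0 w n N\<bar>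
    \<le> \<epsilon> * real m * balanced_weight D e v0 w n N + 2 * K * real m *
      (\<Sum>\<iota> \<in> {\<iota> \<in> (type_assignments D n N :: 'd type_assignment set).
          \<epsilon> * real m \<le> \<bar>assignment_sum (\<lambda>j. ln (w j)) n N \<iota> - \<mu> * real m\<bar>}. assignment_weight w n N \<iota>)"
proof -
  let ?B = "balanced_assignments D e v0 n N"
  let ?aw = "assignment_weight w n N"
  define f where "f \<iota> = assignment_sum (\<lambda>j. ln (w j)) n N \<iota> - \<mu> * real m" for \<iota> :: "'d type_assignment"
  have B_sub: "?B \<subseteq> type_assignments D n N"
    unfolding balanced_assignments_def by blast
  have aw_pos: "\<forall>\<iota> \<in> type_assignments D n N. 0 < ?aw \<iota>"
    using assignment_weight_pos[OF w] by blast
  have lnK: "\<forall>j<D. \<bar>ln (w j)\<bar> \<le> K"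
    unfolding K_def by (auto intro: member_le_sum)
  have \<mu>K: "\<bar>\<mu>\<bar> \<le> K"
    unfolding \<mu>_def by (rule abs_weighted_mean_le[OF D w lnK])
  have f_bound: "\<forall>\<iota> \<in> ?B. \<bar>f \<iota>\<bar> \<le> 2 * K * real m"
  proof
    fix \<iota> assume "\<iota> \<in> ?B"
    then have "\<bar>assignment_sum (\<lambda>j. ln (w j)) n N \<iota>\<bar> \<le> K * real m"
      unfolding m_def using B_sub lnK by (intro abs_assignment_sum_le) auto
    moreover have "\<bar>\<mu> * real m\<bar> \<le> K * real m"
      using \<mu>K by (simp add: abs_mult mult_right_mono)
    ultimately show "\<bar>f \<iota>\<bar> \<le> 2 * K * real m"
      unfolding f_def by linarith
  qed
  have "\<forall>\<iota> \<in> ?B. ln (?aw \<iota>) = assignment_sum (\<lambda>j. ln (w j)) n N \<iota>"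
    using B_sub ln_assignment_weight[OF w] by blast
  then have "balanced_log_weight D e v0 w n N - \<mu> * real m * balanced_weight D e v0 w n N =
      (\<Sum>\<iota> \<in> ?B. ?aw \<iota> * f \<iota>)"
    unfolding balanced_log_weight_def balanced_weight_def f_def
    by (auto simp: sum_distrib_left right_diff_distrib sum_subtractf mult.commute intro!: sum.cong)
  also have "\<bar>\<dots>\<bar> \<le> \<epsilon> * real m * balanced_weight D e v0 w n N +
      2 * K * real m * (\<Sum>\<iota> \<in> {\<iota> \<in> ?B. \<epsilon> * real m \<le> \<bar>f \<iota>\<bar>}. ?aw \<iota>)"
    unfolding balanced_weight_def using \<epsilon> B_sub aw_pos f_bound
    by (intro abs_weighted_sum_le finite_subset[OF B_sub finite_type_assignments]) (auto intro: less_imp_le)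
  also have "(\<Sum>\<iota> \<in> {\<iota> \<in> ?B. \<epsilon> * real m \<le> \<bar>f \<iota>\<bar>}. ?aw \<iota>) \<le>
      (\<Sum>\<iota> \<in> {\<iota> \<in> type_assignments D n N. \<epsilon> * real m \<le> \<bar>f \<iota>\<bar>}. ?aw \<iota>)"
    using B_sub aw_pos
    by (intro sum_mono2) (auto intro: less_imp_le rev_finite_subset[OF finite_type_assignments])
  finally show ?thesis
    unfolding f_def K_def by (simp add: mult_left_mono sum_nonneg)
qed

lemma balanced_log_weight_deviation:
  fixes e :: "nat \<Rightarrow> real^'d"
  assumes n: "n \<ge> 1" and N: "N \<ge> 1" and D: "D \<ge> 1" and w: "\<forall>i<D. 0 < w i"
    and \<epsilon>: "0 < \<epsilon>" and \<rho>: "0 \<le> \<rho>"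
  defines "W \<equiv> \<Sum>j<D. w j" and "\<mu> \<equiv> (\<Sum>j<D. w j * ln (w j)) / (\<Sum>j<D. w j)"
    and "K \<equiv> \<Sum>j<D. \<bar>ln (w j)\<bar>" and "m \<equiv> n ^ CARD('d) * N"
  assumes deviations: "(\<Sum>\<iota> \<in> {\<iota> \<in> (type_assignments D n N :: 'd type_assignment set).
      \<epsilon> * real m \<le> \<bar>assignment_sum (\<lambda>j. ln (w j)) n N \<iota> - \<mu> * real m\<bar>}. assignment_weight w n N \<iota>)
    \<le> 2 * (W * \<rho>) ^ m"
  shows "\<bar>balanced_log_weight D e v0 w n N / balanced_weight D e v0 w n N / real m - \<mu>\<bar>
    \<le> \<epsilon> + 4 * K * \<rho> ^ m * real (N + 1) ^ (D * n ^ CARD('d))"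
proof -
  let ?A = "balanced_weight D e v0 w n N"
  let ?E = "balanced_log_weight D e v0 w n N"
  have W: "0 < W"
    unfolding W_def using D w by (rule sum_lessThan_pos)
  have m: "0 < real m"
    unfolding m_def using n N by simp
  have A: "0 < ?A"
    by (rule balanced_weight_pos[OF n D w])
  have "0 \<le> 2 * K * real m"
    unfolding K_def by (simp add: sum_nonneg)
  from mult_left_mono[OF deviations this] abs_balanced_log_weight_centered_le[OF D w \<epsilon>, of e v0 n N]
  have "\<bar>?E - \<mu> * real m * ?A\<bar> \<le> \<epsilon> * real m * ?A + 4 * K * real m * (W * \<rho>) ^ m"
    unfolding \<mu>_def K_def m_def W_def by linarith
  then have "\<bar>?E - \<mu> * real m * ?A\<bar> / (?A * real m) \<le> (\<epsilon> * real m * ?A + 4 * K * real m * (W * \<rho>) ^ m) / (?A * real m)"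
    using A m by (intro divide_right_mono) simp_all
  moreover have "?E / ?A / real m - \<mu> = (?E - \<mu> * real m * ?A) / (?A * real m)"
    using A m by (simp add: field_simps)
  moreover have "(\<epsilon> * real m * ?A + 4 * K * real m * (W * \<rho>) ^ m) / (?A * real m) = \<epsilon> + 4 * K * (W * \<rho>) ^ m / ?A"
    using A m by (simp add: field_simps)
  ultimately have "\<bar>?E / ?A / real m - \<mu>\<bar> \<le> \<epsilon> + 4 * K * (W * \<rho>) ^ m / ?A"
    using A m by (simp add: abs_divide abs_mult)
  also have "4 * K * (W * \<rho>) ^ m / ?A \<le> 4 * K * (W * \<rho>) ^ m / (W ^ m / real (N + 1) ^ (D * n ^ CARD('d)))"
    using balanced_weight_ge[OF n D w] W \<rho> A unfolding W_def m_def
    by (intro divide_left_mono mult_nonneg_nonneg mult_pos_pos) (auto simp: K_def sum_nonneg)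
  also have "\<dots> = 4 * K * \<rho> ^ m * real (N + 1) ^ (D * n ^ CARD('d))"
    using W by (simp add: power_mult_distrib field_simps)
  finally show ?thesis
    by simp
qed

section \<open>The entropy limit\<close>

lemma ln_balanced_weight_tendsto:
  fixes e :: "nat \<Rightarrow> real^'d"
  assumes n: "n \<ge> 1" and D: "D \<ge> 1" and w: "\<forall>i<D. 0 < w i"
  shows "(\<lambda>N. ln (balanced_weight D e v0 w n N) / real (n ^ CARD('d) * N)) \<longlonglongrightarrow> ln (\<Sum>j<D. w j)"
proof (rule tendsto_sandwich)
  let ?W = "\<Sum>j<D. w j"
  let ?c = "n ^ CARD('d)"
  have W: "0 < ?W"
    using D w by (rule sum_lessThan_pos)
  have pos: "0 < real (?c * N)" if "N \<ge> 1" for N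
    using n that by simp
  have "(\<lambda>N. ln ?W - real D * ln (real (N + 1)) / real N) \<longlonglongrightarrow> ln ?W - 0"
    by (intro tendsto_diff tendsto_const) real_asymp
  then show "(\<lambda>N. ln ?W - real D * ln (real (N + 1)) / real N) \<longlonglongrightarrow> ln ?W"
    by simp
  show "(\<lambda>N. ln ?W) \<longlonglongrightarrow> ln ?W"
    by (rule tendsto_const)
  show "\<forall>\<^sub>F N in sequentially. ln ?W - real D * ln (real (N + 1)) / real N
      \<le> ln (balanced_weight D e v0 w n N) / real (?c * N)"
  proof (rule eventually_sequentiallyI[of 1])
    fix N :: nat assume N: "N \<ge> 1"
    have "0 < ?W ^ (?c * N) / real (N + 1) ^ (D * ?c)"
      using W by simp
    then have "ln (?W ^ (?c * N) / real (N + 1) ^ (D * ?c)) \<le> ln (balanced_weight D e v0 w n N)"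
      using balanced_weight_ge[OF n D w, of N e v0] by simp
    also have "ln (?W ^ (?c * N) / real (N + 1) ^ (D * ?c)) =
        real (?c * N) * (ln ?W - real D * ln (real (N + 1)) / real N)"
      using W N by (simp add: ln_div ln_realpow field_simps)
    finally show "ln ?W - real D * ln (real (N + 1)) / real N \<le> ln (balanced_weight D e v0 w n N) / real (?c * N)"
      using pos[OF N] by (simp add: pos_le_divide_eq mult.commute)
  qed
  show "\<forall>\<^sub>F N in sequentially. ln (balanced_weight D e v0 w n N) / real (?c * N) \<le> ln ?W"
  proof (rule eventually_sequentiallyI[of 1])
    fix N :: nat assume N: "N \<ge> 1"
    have "ln (balanced_weight D e v0 w n N) \<le> ln (?W ^ (?c * N))"
      using balanced_weight_pos[OF n D w, of e v0 N] balanced_weight_le[OF w, of e v0 n N] by simp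
    also have "\<dots> = real (?c * N) * ln ?W"
      using W by (simp add: ln_realpow)
    finally show "ln (balanced_weight D e v0 w n N) / real (?c * N) \<le> ln ?W"
      using pos[OF N] by (simp add: pos_divide_le_eq mult.commute)
  qed
qed

lemma balanced_log_weight_tendsto:
  fixes e :: "nat \<Rightarrow> real^'d"
  assumes n: "n \<ge> 1" and D: "D \<ge> 1" and w: "\<forall>i<D. 0 < w i"
  shows "(\<lambda>N. balanced_log_weight D e v0 w n N / balanced_weight D e v0 w n N / real (n ^ CARD('d) * N))
    \<longlonglongrightarrow> (\<Sum>j<D. w j * ln (w j)) / (\<Sum>j<D. w j)"
proof (rule tendstoI)
  fix r :: real assume "0 < r"
  let ?c = "n ^ CARD('d)"
  let ?K = "\<Sum>j<D. \<bar>ln (w j)\<bar>"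
  define \<epsilon> where "\<epsilon> = r / 2"
  have \<epsilon>: "0 < \<epsilon>"
    unfolding \<epsilon>_def using \<open>0 < r\<close> by simp
  obtain \<rho> where \<rho>: "0 < \<rho>" "\<rho> < 1" and deviations: "\<forall>n N.
    (\<Sum>\<iota> \<in> {\<iota> \<in> (type_assignments D n N :: 'd type_assignment set).
        \<epsilon> * real (n ^ CARD('d) * N) \<le> \<bar>assignment_sum (\<lambda>j. ln (w j)) n N \<iota> -
          (\<Sum>j<D. w j * ln (w j)) / (\<Sum>j<D. w j) * real (n ^ CARD('d) * N)\<bar>}. assignment_weight w n N \<iota>)
    \<le> 2 * ((\<Sum>j<D. w j) * \<rho>) ^ (n ^ CARD('d) * N)"
    using deviation_bound[OF D w \<epsilon>, of "\<lambda>j. ln (w j)", where 'd = 'd] by blast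
  have "(\<lambda>N. 4 * ?K * (\<rho> ^ N * real (N + 1) ^ D) ^ ?c) \<longlonglongrightarrow> 4 * ?K * 0 ^ ?c"
    by (intro tendsto_intros geometric_times_polynomial_tendsto_zero \<rho>)
  moreover have "(0::real) ^ ?c = 0"
    using n by simp
  ultimately have "(\<lambda>N. 4 * ?K * (\<rho> ^ N * real (N + 1) ^ D) ^ ?c) \<longlonglongrightarrow> 0"
    by simp
  then have "\<forall>\<^sub>F N in sequentially. 4 * ?K * (\<rho> ^ N * real (N + 1) ^ D) ^ ?c < \<epsilon>"
    using \<epsilon> by (rule order_tendstoD(2))
  then show "\<forall>\<^sub>F N in sequentially.
      dist (balanced_log_weight D e v0 w n N / balanced_weight D e v0 w n N / real (?c * N))
        ((\<Sum>j<D. w j * ln (w j)) / (\<Sum>j<D. w j)) < r"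
    using eventually_ge_at_top[of 1]
  proof eventually_elim
    case (elim N)
    have "\<bar>balanced_log_weight D e v0 w n N / balanced_weight D e v0 w n N / real (?c * N)
        - (\<Sum>j<D. w j * ln (w j)) / (\<Sum>j<D. w j)\<bar>
      \<le> \<epsilon> + 4 * ?K * \<rho> ^ (?c * N) * real (N + 1) ^ (D * ?c)"
      using deviations by (intro balanced_log_weight_deviation[OF n elim(2) D w \<epsilon> less_imp_le[OF \<rho>(1)]]) blast
    also have "4 * ?K * \<rho> ^ (?c * N) * real (N + 1) ^ (D * ?c) = 4 * ?K * (\<rho> ^ N * real (N + 1) ^ D) ^ ?c"
      by (simp add: power_mult power_mult_distrib mult.commute)
    finally show ?case
      using elim(1) unfolding dist_real_def \<epsilon>_def by simp
  qed
qed

lemma boltzmann_entropy_tendsto: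
  fixes e :: "nat \<Rightarrow> real^'d"
  assumes n: "n \<ge> 1" and D: "D \<ge> 1" and w: "\<forall>i<D. 0 < w i"
  shows "(\<lambda>N. (boltzmann_entropy D e v0 w n N - real (n ^ CARD('d)) * ln (fact N)) / (real N * real (n ^ CARD('d))))
    \<longlonglongrightarrow> ln (\<Sum>i<D. w i) - (\<Sum>i<D. w i * ln (w i)) / (\<Sum>i<D. w i)"
proof (rule Lim_transform_eventually)
  show "(\<lambda>N. ln (balanced_weight D e v0 w n N) / real (n ^ CARD('d) * N) -
      balanced_log_weight D e v0 w n N / balanced_weight D e v0 w n N / real (n ^ CARD('d) * N))
    \<longlonglongrightarrow> ln (\<Sum>i<D. w i) - (\<Sum>i<D. w i * ln (w i)) / (\<Sum>i<D. w i)"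
    by (intro tendsto_diff ln_balanced_weight_tendsto balanced_log_weight_tendsto n D w)
  show "\<forall>\<^sub>F N in sequentially.
      ln (balanced_weight D e v0 w n N) / real (n ^ CARD('d) * N) -
        balanced_log_weight D e v0 w n N / balanced_weight D e v0 w n N / real (n ^ CARD('d) * N) =
      (boltzmann_entropy D e v0 w n N - real (n ^ CARD('d)) * ln (fact N)) / (real N * real (n ^ CARD('d)))"
    using boltzmann_entropy_eq[OF n _ balanced_weight_pos[OF n D w, of e v0]] w
    by (simp add: diff_divide_distrib mult.commute less_imp_le)
qed

theorem mainTheorem2:
  fixes D :: nat and e :: "nat \<Rightarrow> real^'d" and v0 :: "real^'d" and w :: "nat \<Rightarrow> real"
  assumes span_e: "span (e ` {..<D}) = UNIV"
    and sum_e: "(\<Sum>i<D. e i) = 0"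
    and e_v0: "\<forall>i<D. int_point (e i - v0)"
    and e_inj: "inj_on e {..<D}"
    and conn: "Lambda_connected D e v0"
    and w_pos: "\<forall>i<D. w i > 0"
  shows "\<exists>L :: nat \<Rightarrow> real.
           (\<forall>\<^sub>F n in sequentially.
              ((\<lambda>N. (boltzmann_entropy D e v0 w n N - real (n ^ CARD('d)) * ln (fact N))
                      / (real N * real (n ^ CARD('d)))) \<longlongrightarrow> L n) sequentially) \<and>
           (L \<longlonglongrightarrow> ln (\<Sum>i<D. w i) - (\<Sum>i<D. w i * ln (w i)) / (\<Sum>i<D. w i))"
proof -
  have D: "D \<ge> 1"
  proof (rule ccontr)
    assume "\<not> D \<ge> 1"
    then have "D = 0"
      by simp
    then have "span (e ` {..<D}) = {0}"
      by simp
    then have "(UNIV :: (real^'d) set) = {0}"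
      using span_e by simp
    then show False
      by (metis UNIV_I singletonD zero_neq_one)
  qed
  show ?thesis
    by (intro exI[of _ "\<lambda>_. ln (\<Sum>i<D. w i) - (\<Sum>i<D. w i * ln (w i)) / (\<Sum>i<D. w i)"] conjI
        tendsto_const eventually_sequentiallyI[of 1] boltzmann_entropy_tendsto D w_pos)
qed

end
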